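(* Let $\alpha=(\alpha_1,\dots,\alpha_n)$ be a composition, $\lambda$ a partition, and $k\ge0$ an integer with $\lambda_1-k\le n$. Let $T$ be a semistandard Young tableau of shape $\lambda\oplus\Delta_\alpha$ with lattice reading word such that the first row of $\lambda$ in $T$ contains at most $k$ entries equal to $1$. Then the tableau of shape $\mathcal{S}(\lambda,\alpha;k)$ obtained from $T$ by keeping the filling of $\Delta_\alpha$ and moving the filled copy of $\lambda$ (unchanged) to the right into the foundation position of $\mathcal{S}(\lambda,\alpha;k)$ is also a semistandard Young tableau with lattice reading word.
   Context: Diagrams use English convention: boxes $(r,c)$ with row index increasing downward, column index increasing rightward. For a composition $\alpha=(\alpha_1,\dots,\alpha_n)$, $|\alpha|=\sum_i\alpha_i$, and $\Delta_\alpha$ is the $180^\circ$ rotation of the Ferrers diagram of the partition $(n^{\alpha_n},(n-1)^{\alpha_{n-1}},\dots,1^{\alpha_1})$; it occupies rows $1,\dots,|\alpha|$, each row right-justified ending in column $n$, with $\alpha_i$ rows of length $i$, row lengths weakly increasing downward. For diagrams $D_1,D_2$, the direct sum $D_1\oplus D_2$ is the diagram consisting of disjoint copies of $D_1$ and $D_2$ placed so that the top-right box of $D_1$ is one step left and one step down from the bottom-left box of $D_2$. For $k\ge0$ and a partition $\lambda$ with $\lambda_1-k\le n$, $\mathcal{S}(\lambda,\alpha;k)$ consists of $\Delta_\alpha$ together with a copy of the Ferrers diagram of $\lambda$ (the foundation) placed so that row $r$ of $\lambda$ occupies row $|\alpha|+r$, columns $1-k$ through $\lambda_r-k$ (the first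 row of $\lambda$ starts one row below and $k$ columns left of the bottom-left box of $\Delta_\alpha$). A tableau is a filling of boxes by positive integers; it is semistandard if rows weakly increase left to right and columns strictly increase top to bottom. The reading word reads rows right to left, top row to bottom row; a sequence is lattice if in every initial segment, for every $j\ge1$, the number of $j$'s is at least the number of $(j+1)$'s. *)

theory Defs
  imports Main
begin

text \<open>Boxes are (row, column) pairs of integers, English convention:
  rows increase downward, columns increase rightward.\<close>

type_synonym box = "int \<times> int"
type_synonym diagram = "box set"
type_synonym tableau = "box \<Rightarrow> nat"

definition is_partition :: "nat list \<Rightarrow> bool" where
  "is_partition lam \<longleftrightarrow> sorted_wrt (\<ge>) lam \<and> (\<forall>x\<in>set lam. 0 < x)"

definition is_composition :: "nat list \<Rightarrow> bool" where
  "is_composition alpha \<longleftrightarrow> (\<forall>x\<in>set alpha. 0 < x)"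

definition part1 :: "nat list \<Rightarrow> nat" where
  "part1 lam = (case lam of [] \<Rightarrow> 0 | x # _ \<Rightarrow> x)"

definition ferrers :: "nat list \<Rightarrow> diagram" where
  "ferrers lam = {(r, c). 1 \<le> r \<and> r \<le> int (length lam) \<and> 1 \<le> c \<and> c \<le> int (lam ! nat (r - 1))}"

definition shift :: "box \<Rightarrow> diagram \<Rightarrow> diagram" where
  "shift d D = (\<lambda>(r, c). (r + fst d, c + snd d)) ` D"

definition top_right :: "diagram \<Rightarrow> box" where
  "top_right D = (let r = Min (fst ` D) in (r, Max {c. (r, c) \<in> D}))"

definition bottom_left :: "diagram \<Rightarrow> box" where
  "bottom_left D = (let r = Max (fst ` D) in (r, Min {c. (r, c) \<in> D}))"

text \<open>Translation applied to D1 in the direct sum D1 (+) D2: the top-right box of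
  D1 is moved one step left and one step down from the bottom-left box of D2.\<close>
definition dsum_offset :: "diagram \<Rightarrow> diagram \<Rightarrow> box" where
  "dsum_offset D1 D2 =
     (fst (bottom_left D2) + 1 - fst (top_right D1),
      snd (bottom_left D2) - 1 - snd (top_right D1))"

definition direct_sum :: "diagram \<Rightarrow> diagram \<Rightarrow> diagram" where
  "direct_sum D1 D2 = shift (dsum_offset D1 D2) D1 \<union> D2"

definition row_lengths :: "nat list \<Rightarrow> nat list" where
  "row_lengths alpha = concat (map (\<lambda>i. replicate (alpha ! i) (i + 1)) [0..<length alpha])"

definition delta :: "nat list \<Rightarrow> diagram" where
  "delta alpha = {(r, c). 1 \<le> r \<and> r \<le> int (sum_list alpha) \<and>
      int (length alpha) - int (row_lengths alpha ! nat (r - 1)) + 1 \<le> c \<and> c \<le> int (length alpha)}"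

definition foundation :: "nat list \<Rightarrow> nat list \<Rightarrow> nat \<Rightarrow> diagram" where
  "foundation lam alpha k = shift (int (sum_list alpha), - int k) (ferrers lam)"

definition S_diag :: "nat list \<Rightarrow> nat list \<Rightarrow> nat \<Rightarrow> diagram" where
  "S_diag lam alpha k = delta alpha \<union> foundation lam alpha k"

definition semistandard :: "diagram \<Rightarrow> tableau \<Rightarrow> bool" where
  "semistandard D T \<longleftrightarrow>
     (\<forall>b\<in>D. 0 < T b) \<and>
     (\<forall>r c c'. (r, c) \<in> D \<longrightarrow> (r, c') \<in> D \<longrightarrow> c \<le> c' \<longrightarrow> T (r, c) \<le> T (r, c')) \<and>
     (\<forall>r r' c. (r, c) \<in> D \<longrightarrow> (r', c) \<in> D \<longrightarrow> r < r' \<longrightarrow> T (r, c) < T (r', c))"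

definition reading_word :: "diagram \<Rightarrow> tableau \<Rightarrow> nat list" where
  "reading_word D T =
     concat (map (\<lambda>r. map (\<lambda>c. T (r, c)) (rev (sorted_list_of_set {c. (r, c) \<in> D})))
                 (sorted_list_of_set (fst ` D)))"

definition lattice_word :: "nat list \<Rightarrow> bool" where
  "lattice_word w \<longleftrightarrow>
     (\<forall>i \<le> length w. \<forall>j \<ge> 1. count_list (take i w) (j + 1) \<le> count_list (take i w) j)"

definition moved_tableau :: "nat list \<Rightarrow> nat list \<Rightarrow> nat \<Rightarrow> tableau \<Rightarrow> tableau" where
  "moved_tableau lam alpha k T = (\<lambda>(r, c).
     if (r, c) \<in> delta alpha then T (r, c)
     else (let d = dsum_offset (ferrers lam) (delta alpha)
           in T (r - int (sum_list alpha) + fst d, c + int k + snd d)))"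

end

theory Submission
  imports Defs
begin

text \<open>Every box of Delta_alpha lies above every box of lambda, so Delta_alpha is read first, and the
  lattice condition forces its filling: the box (r, c) holds the number of boxes of column c
  at or above it. A second lattice argument, at the boxes of the first row of lambda, shows that
  the entry which the move places under column c of Delta_alpha exceeds the height of that
  column; this is where the bound on the number of 1s is needed, since it makes these entries
  at least 2. So columns stay strict across the seam, while rows are merely translated,
  which preserves weak increase along rows and the reading word.\<close>

lemma mem_shift_iff: "(r, c) \<in> shift (a, b) D \<longleftrightarrow> (r - a, c - b) \<in> D"
  by (force simp: shift_def)

lemma finite_shift: "finite D \<Longrightarrow> finite (shift d D)"
  by (simp add: shift_def)

lemma finite_row: "finite D \<Longrightarrow> finite {c. (r, c) \<in> D}"
  by (rule finite_subset[of _ "snd ` D"]) force+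

lemma sorted_list_of_set_strict_mono_image:
  fixes f :: "'a::linorder \<Rightarrow> 'b::linorder"
  assumes "strict_mono f" "finite A"
  shows "sorted_list_of_set (f ` A) = map f (sorted_list_of_set A)"
proof (rule strict_sorted_equal)
  show "sorted_wrt (<) (map f (sorted_list_of_set A))"
    using strict_sorted_list_of_set[of A] assms(1)
    by (auto simp: sorted_wrt_map strict_mono_less intro: sorted_wrt_mono_rel)
qed (use assms in auto)

lemma count_list_map_distinct:
  "distinct xs \<Longrightarrow> count_list (map f xs) v = card {x \<in> set xs. f x = v}"
  by (simp add: count_list_eq_length_filter filter_map comp_def eq_commute[of v]
      flip: distinct_card[OF distinct_filter] set_filter)

definition reading_le :: "box \<Rightarrow> box \<Rightarrow> bool" where
  "reading_le a b \<longleftrightarrow> fst a < fst b \<or> (fst a = fst b \<and> snd b \<le> snd a)"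

definition reading_less :: "box \<Rightarrow> box \<Rightarrow> bool" where
  "reading_less a b \<longleftrightarrow> fst a < fst b \<or> (fst a = fst b \<and> snd b < snd a)"

lemma reading_le_iff_less_or_eq: "reading_le a b \<longleftrightarrow> reading_less a b \<or> a = b"
  by (cases a; cases b) (auto simp: reading_le_def reading_less_def)

lemma reading_less_induct [consumes 2, case_names less]:
  assumes "finite A" "b \<in> A"
    and "\<And>b. b \<in> A \<Longrightarrow> (\<And>b'. b' \<in> A \<Longrightarrow> reading_less b' b \<Longrightarrow> P b') \<Longrightarrow> P b"
  shows "P b"
proof -
  let ?R = "{(x, y). x \<in> A \<and> y \<in> A \<and> reading_less x y}"
  have "trans ?R"
    by (rule transI) (auto simp: reading_less_def)
  moreover have "irrefl ?R"
    by (auto simp: irrefl_def reading_less_def)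
  ultimately have "wf ?R"
    using assms(1) by (intro finite_acyclic_wf) (auto simp: acyclic_irrefl intro: finite_subset[of _ "A \<times> A"])
  then show ?thesis
    using assms(2) by (induction b rule: wf_induct_rule) (use assms(3) in blast)
qed

definition reading_boxes :: "diagram \<Rightarrow> box list" where
  "reading_boxes D = concat (map (\<lambda>r. map (\<lambda>c. (r, c)) (rev (sorted_list_of_set {c. (r, c) \<in> D})))
                 (sorted_list_of_set (fst ` D)))"

lemma reading_word_eq_map: "reading_word D T = map T (reading_boxes D)"
  by (simp add: reading_word_def reading_boxes_def map_concat comp_def)

lemma set_reading_boxes: "finite D \<Longrightarrow> set (reading_boxes D) = D"
  by (force simp: reading_boxes_def finite_row)

lemma sorted_reading_boxes: "finite D \<Longrightarrow> sorted_wrt reading_less (reading_boxes D)"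
proof -
  have "sorted_wrt reading_less (concat (map (\<lambda>r. map (\<lambda>c. (r, c)) (cs r)) rs))"
    if "sorted_wrt (<) rs" "\<And>r. sorted_wrt (>) (cs r)" for rs and cs :: "int \<Rightarrow> int list"
    using that(1)
  proof (induction rs)
    case (Cons r rs)
    then show ?case
      using that(2)[of r] by (auto simp: sorted_wrt_append sorted_wrt_map reading_less_def
          intro: sorted_wrt_mono_rel)
  qed simp
  then show ?thesis
    unfolding reading_boxes_def by (simp add: sorted_wrt_rev strict_sorted_list_of_set)
qed

lemma sorted_wrt_irrefl_distinct: "(\<And>x. \<not> P x x) \<Longrightarrow> sorted_wrt P xs \<Longrightarrow> distinct xs"
  by (induction xs) auto

lemma distinct_reading_boxes: "finite D \<Longrightarrow> distinct (reading_boxes D)"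
  by (rule sorted_wrt_irrefl_distinct[OF _ sorted_reading_boxes]) (simp_all add: reading_less_def)

lemma set_take_Suc_sorted_reading:
  assumes sorted: "sorted_wrt reading_less L" and i: "i < length L"
  shows "set (take (Suc i) L) = {x \<in> set L. reading_le x (L ! i)}"
proof -
  have le_iff: "reading_le (L ! i') (L ! i) \<longleftrightarrow> i' \<le> i" if "i' < length L" for i'
  proof (cases i' i rule: linorder_cases)
    case less
    then show ?thesis using sorted_wrt_nth_less[OF sorted less i] by (simp add: reading_le_iff_less_or_eq)
  next
    case greater
    then show ?thesis using sorted_wrt_nth_less[OF sorted greater that]
      by (auto simp: reading_le_def reading_less_def)
  qed (simp add: reading_le_def)
  have "set (take (Suc i) L) = (!) L ` {0..<Suc i}"
    using i by (simp add: nth_image)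
  also have "\<dots> = {x \<in> set L. reading_le x (L ! i)}"
  proof (intro set_eqI iffI)
    fix x assume "x \<in> (!) L ` {0..<Suc i}"
    then obtain i' where "i' \<le> i" "x = L ! i'" using less_Suc_eq_le by auto
    then show "x \<in> {x \<in> set L. reading_le x (L ! i)}" using i le_iff by auto
  next
    fix x assume "x \<in> {x \<in> set L. reading_le x (L ! i)}"
    then obtain i' where "i' < length L" "x = L ! i'" "reading_le x (L ! i)"
      by (auto simp: in_set_conv_nth)
    then show "x \<in> (!) L ` {0..<Suc i}" using le_iff by auto
  qed
  finally show ?thesis .
qed

definition reading_prefix :: "diagram \<Rightarrow> tableau \<Rightarrow> box \<Rightarrow> nat \<Rightarrow> box set" where
  "reading_prefix D T b v = {b' \<in> D. reading_le b' b \<and> T b' = v}"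

lemma card_reading_prefix_Suc_le:
  assumes "finite D" "lattice_word (reading_word D T)" "b \<in> D" "1 \<le> i"
  shows "card (reading_prefix D T b (Suc i)) \<le> card (reading_prefix D T b i)"
proof -
  let ?L = "reading_boxes D"
  obtain l where l: "l < length ?L" "?L ! l = b"
    using assms(3) set_reading_boxes[OF assms(1)] by (metis in_set_conv_nth)
  have prefix: "set (take (Suc l) ?L) = {b' \<in> D. reading_le b' b}"
    using set_take_Suc_sorted_reading[OF sorted_reading_boxes[OF assms(1)] l(1)] l(2)
      set_reading_boxes[OF assms(1)] by simp
  have count: "count_list (take (Suc l) (reading_word D T)) v = card (reading_prefix D T b v)" for v
    using distinct_reading_boxes[OF assms(1)]
    by (simp add: reading_word_eq_map take_map count_list_map_distinct prefix reading_prefix_def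
        flip: Collect_conj_eq[of "\<lambda>x. x \<in> D"])
  have "Suc l \<le> length (reading_word D T)"
    using l(1) by (simp add: reading_word_eq_map)
  then show ?thesis
    using assms(2,4) count unfolding lattice_word_def by (metis Suc_eq_plus1)
qed

lemma reading_prefix_injection_onto:
  assumes "finite D" "lattice_word (reading_word D T)" "b \<in> D" "1 \<le> i"
    and "inj_on f (reading_prefix D T b i)"
    and "f ` reading_prefix D T b i \<subseteq> reading_prefix D T b (Suc i)"
  shows "f ` reading_prefix D T b i = reading_prefix D T b (Suc i)"
  using assms card_reading_prefix_Suc_le[OF assms(1-4)]
  by (intro card_seteq) (auto simp: card_image reading_prefix_def)

lemma reading_word_reindex:
  fixes \<rho> :: "int \<Rightarrow> int" and \<sigma> :: "int \<Rightarrow> int \<Rightarrow> int"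
  assumes "finite D" "finite E"
    and "strict_mono \<rho>" "surj \<rho>" "\<And>r. strict_mono (\<sigma> r)"
    and cols: "\<And>r. {c. (\<rho> r, c) \<in> D} = \<sigma> r ` {c. (r, c) \<in> E}"
    and vals: "\<And>r c. (r, c) \<in> E \<Longrightarrow> T' (r, c) = T (\<rho> r, \<sigma> r c)"
  shows "reading_word E T' = reading_word D T"
proof -
  have rows: "fst ` D = \<rho> ` fst ` E"
  proof (intro set_eqI iffI)
    fix x assume "x \<in> fst ` D"
    moreover obtain r where "x = \<rho> r" using \<open>surj \<rho>\<close> by (metis surjD)
    ultimately show "x \<in> \<rho> ` fst ` E" using cols[of r] by force
  next
    fix x assume "x \<in> \<rho> ` fst ` E"
    then show "x \<in> fst ` D" using cols by force
  qed
  have row_words: "map (\<lambda>c. T (\<rho> r, c)) (rev (sorted_list_of_set {c. (\<rho> r, c) \<in> D}))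
      = map (\<lambda>c. T' (r, c)) (rev (sorted_list_of_set {c. (r, c) \<in> E}))" for r
    using vals finite_row[OF \<open>finite E\<close>, of r]
    by (simp add: cols sorted_list_of_set_strict_mono_image[OF assms(5) finite_row[OF \<open>finite E\<close>]]
        rev_map)
  show ?thesis
    unfolding reading_word_def rows
      sorted_list_of_set_strict_mono_image[OF assms(3) finite_imageI[OF \<open>finite E\<close>]]
    by (simp add: comp_def row_words)
qed

lemma reading_word_cong:
  assumes "finite D" "\<And>b. b \<in> D \<Longrightarrow> T' b = T b"
  shows "reading_word D T' = reading_word D T"
  using assms by (simp add: reading_word_eq_map set_reading_boxes)

lemma semistandard_cong: "(\<And>b. b \<in> D \<Longrightarrow> T' b = T b) \<Longrightarrow> semistandard D T' \<longleftrightarrow> semistandard D T"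
  unfolding semistandard_def by simp

lemma shift_shift: "shift (a, b) (shift (a', b') D) = shift (a + a', b + b') D"
  by (auto simp: mem_shift_iff diff_diff_eq add.commute)

lemma semistandard_translate:
  assumes "semistandard D T"
    and "\<And>r c. (r, c) \<in> E \<Longrightarrow> (r + a, c + b) \<in> D \<and> T' (r, c) = T (r + a, c + b)"
  shows "semistandard E T'"
  unfolding semistandard_def
proof (intro conjI allI impI ballI)
  show "0 < T' x" if "x \<in> E" for x
    using that assms by (cases x) (force simp: semistandard_def)
  show "T' (r, c) \<le> T' (r, c')" if "(r, c) \<in> E" "(r, c') \<in> E" "c \<le> c'" for r c c'
    using that assms unfolding semistandard_def by (metis add_le_cancel_right)
  show "T' (r, c) < T' (r', c)" if "(r, c) \<in> E" "(r', c) \<in> E" "r < r'" for r r' c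
    using that assms unfolding semistandard_def by (metis add_less_cancel_right)
qed

lemma reading_word_translate:
  assumes "finite D" "\<And>r c. (r, c) \<in> D \<Longrightarrow> T' (r + a, c + b) = T (r, c)"
  shows "reading_word (shift (a, b) D) T' = reading_word D T"
proof (rule reading_word_reindex[where \<rho> = "\<lambda>r. r - a" and \<sigma> = "\<lambda>_ c. c - b"])
  show "surj (\<lambda>r::int. r - a)" by (rule surjI[of _ "\<lambda>r. r + a"]) simp
  show "{c. (r - a, c) \<in> D} = (\<lambda>c. c - b) ` {c. (r, c) \<in> shift (a, b) D}" for r
    by (auto simp: mem_shift_iff image_iff) (metis add_diff_cancel)
  show "T' (r, c) = T (r - a, c - b)" if "(r, c) \<in> shift (a, b) D" for r c
    using that assms(2)[of "r - a" "c - b"] by (simp add: mem_shift_iff)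
qed (use assms in \<open>auto simp: finite_shift strict_mono_def\<close>)

lemma semistandard_shift_lower_rows:
  assumes "semistandard D T"
    and upper: "\<And>r c. r \<le> m \<Longrightarrow> (r, c) \<in> E \<longleftrightarrow> (r, c) \<in> D"
    and lower: "\<And>r c. m < r \<Longrightarrow> (r, c) \<in> E \<longleftrightarrow> (r, c - j) \<in> D"
    and vals: "\<And>r c. (r, c) \<in> E \<Longrightarrow> T' (r, c) = (if r \<le> m then T (r, c) else T (r, c - j))"
    and cross: "\<And>r r' c. (r, c) \<in> D \<Longrightarrow> r \<le> m \<Longrightarrow> (r', c - j) \<in> D \<Longrightarrow> m < r'
      \<Longrightarrow> T (r, c) < T (r', c - j)"
  shows "semistandard E T'"
  unfolding semistandard_def
proof (intro conjI allI impI ballI)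
  have pos: "\<And>x. x \<in> D \<Longrightarrow> 0 < T x"
    and row: "\<And>r c c'. (r, c) \<in> D \<Longrightarrow> (r, c') \<in> D \<Longrightarrow> c \<le> c' \<Longrightarrow> T (r, c) \<le> T (r, c')"
    and col: "\<And>r r' c. (r, c) \<in> D \<Longrightarrow> (r', c) \<in> D \<Longrightarrow> r < r' \<Longrightarrow> T (r, c) < T (r', c)"
    using assms(1) unfolding semistandard_def by blast+
  show "0 < T' x" if "x \<in> E" for x
    using that pos upper lower vals by (cases x) (auto split: if_splits)
  show "T' (r, c) \<le> T' (r, c')" if "(r, c) \<in> E" "(r, c') \<in> E" "c \<le> c'" for r c c'
    using that row[of r c c'] row[of r "c - j" "c' - j"] upper lower vals by auto
  show "T' (r, c) < T' (r', c)" if "(r, c) \<in> E" "(r', c) \<in> E" "r < r'" for r r' c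
    using that col[of r c r'] col[of r "c - j" r'] cross[of r c r'] upper lower vals
    by (cases "r' \<le> m"; cases "r \<le> m") auto
qed

lemma reading_word_shift_lower_rows:
  assumes "finite D" "finite E"
    and upper: "\<And>r c. r \<le> m \<Longrightarrow> (r, c) \<in> E \<longleftrightarrow> (r, c) \<in> D"
    and lower: "\<And>r c. m < r \<Longrightarrow> (r, c) \<in> E \<longleftrightarrow> (r, c - j) \<in> D"
    and vals: "\<And>r c. (r, c) \<in> E \<Longrightarrow> T' (r, c) = (if r \<le> m then T (r, c) else T (r, c - j))"
  shows "reading_word E T' = reading_word D T"
proof (rule reading_word_reindex[where \<rho> = id and \<sigma> = "\<lambda>r c. if r \<le> m then c else c - j"])
  show "{c. (id r, c) \<in> D} = (\<lambda>c. if r \<le> m then c else c - j) ` {c. (r, c) \<in> E}" for r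
    using upper lower by (auto simp: image_iff) (metis add_diff_cancel)
qed (use assms in \<open>auto simp: strict_mono_def\<close>)

definition col_depth :: "diagram \<Rightarrow> int \<Rightarrow> int \<Rightarrow> nat" where
  "col_depth E r c = card {r'. 1 \<le> r' \<and> r' \<le> r \<and> (r', c) \<in> E}"

text \<open>Dd plays Delta_alpha, whose row r occupies columns g r to n; all other boxes of D lie
  below row m.\<close>

locale staircase_tableau =
  fixes D Dd :: diagram and T :: tableau and m n :: int and g :: "int \<Rightarrow> int"
  assumes staircase_mem: "(r, c) \<in> Dd \<longleftrightarrow> 1 \<le> r \<and> r \<le> m \<and> g r \<le> c \<and> c \<le> n"
    and g_antimono: "1 \<le> r \<Longrightarrow> r \<le> r' \<Longrightarrow> r' \<le> m \<Longrightarrow> g r' \<le> g r"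
    and g_pos: "1 \<le> r \<Longrightarrow> r \<le> m \<Longrightarrow> 1 \<le> g r"
    and staircase_subset: "Dd \<subseteq> D"
    and upper_rows: "(r, c) \<in> D \<Longrightarrow> r \<le> m \<Longrightarrow> (r, c) \<in> Dd"
    and finite_diagram: "finite D"
    and semistandard: "semistandard D T"
    and lattice: "lattice_word (reading_word D T)"
begin

lemma entry_pos: "b \<in> D \<Longrightarrow> 0 < T b"
  and entry_row_mono: "(r, c) \<in> D \<Longrightarrow> (r, c') \<in> D \<Longrightarrow> c \<le> c' \<Longrightarrow> T (r, c) \<le> T (r, c')"
  and entry_col_strict: "(r, c) \<in> D \<Longrightarrow> (r', c) \<in> D \<Longrightarrow> r < r' \<Longrightarrow> T (r, c) < T (r', c)"
  using semistandard unfolding semistandard_def by blast+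

lemma staircase_down_closed: "(r, c) \<in> Dd \<Longrightarrow> r \<le> r' \<Longrightarrow> r' \<le> m \<Longrightarrow> (r', c) \<in> Dd"
  using g_antimono[of r r'] by (auto simp: staircase_mem)

lemma col_depth_step: "(r, c) \<in> Dd \<Longrightarrow> col_depth Dd r c = Suc (col_depth Dd (r - 1) c)"
proof -
  assume "(r, c) \<in> Dd"
  then have "{r'. 1 \<le> r' \<and> r' \<le> r \<and> (r', c) \<in> Dd}
      = insert r {r'. 1 \<le> r' \<and> r' \<le> r - 1 \<and> (r', c) \<in> Dd}"
    by (auto simp: staircase_mem)
  moreover have "finite {r'. 1 \<le> r' \<and> r' \<le> r - 1 \<and> (r', c) \<in> Dd}"
    by (rule finite_subset[of _ "{1..r}"]) auto
  ultimately show ?thesis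
    unfolding col_depth_def by simp
qed

lemma col_depth_top:
  assumes "(r, c) \<in> Dd" "(r - 1, c) \<notin> Dd"
  shows "col_depth Dd (r - 1) c = 0"
proof -
  have "(r', c) \<notin> Dd" if "r' \<le> r - 1" for r'
    using staircase_down_closed[of r' c "r - 1"] assms that by (auto simp: staircase_mem)
  then have "{r'. 1 \<le> r' \<and> r' \<le> r - 1 \<and> (r', c) \<in> Dd} = {}"
    by auto
  then show ?thesis
    unfolding col_depth_def by (simp only: card.empty)
qed

lemma col_depth_mono_col: "c \<le> c' \<Longrightarrow> c' \<le> n \<Longrightarrow> col_depth Dd r c \<le> col_depth Dd r c'"
  unfolding col_depth_def
  by (rule card_mono) (auto simp: staircase_mem intro: finite_subset[of _ "{1..r}"])

lemma col_depth_mono_row: "r \<le> r' \<Longrightarrow> col_depth Dd r c \<le> col_depth Dd r' c"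
  unfolding col_depth_def by (rule card_mono) (auto intro: finite_subset[of _ "{1..r'}"])

lemma finite_staircase: "finite Dd"
  using finite_diagram staircase_subset by (rule finite_subset[rotated])

lemma col_depth_le_entry: "b \<in> Dd \<Longrightarrow> col_depth Dd (fst b) (snd b) \<le> T b"
  using finite_staircase
proof (induction b rule: reading_less_induct)
  case (less b)
  obtain r c where b: "b = (r, c)" by force
  show ?case
  proof (cases "(r - 1, c) \<in> Dd")
    case True
    then have "col_depth Dd (r - 1) c \<le> T (r - 1, c)"
      using less b by (force simp: reading_less_def)
    also have "\<dots> < T (r, c)"
      using True less b staircase_subset by (intro entry_col_strict) auto
    finally show ?thesis using col_depth_step less b by simp
  next
    case False
    have "0 < T (r, c)"
      using entry_pos less b staircase_subset by auto
    then show ?thesis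
      using col_depth_step col_depth_top False less b by simp
  qed
qed

lemma reading_prefix_above_staircase:
  assumes rc: "(r, c) \<in> Dd" and v: "T (r, c) = Suc i" and depth: "col_depth Dd r c \<le> i"
    and IH: "\<And>r' c'. (r', c') \<in> Dd \<Longrightarrow> reading_less (r', c') (r, c) \<Longrightarrow> T (r', c') = col_depth Dd r' c'"
    and prefix: "(r', c') \<in> reading_prefix D T (r, c) i"
  shows "(r' + 1, c') \<in> Dd \<and> reading_less (r' + 1, c') (r, c) \<and> col_depth Dd r' c' = i"
proof -
  have b': "(r', c') \<in> D" "reading_le (r', c') (r, c)" "T (r', c') = i"
    using prefix by (auto simp: reading_prefix_def)
  then have "(r', c') \<in> Dd"
    using rc upper_rows by (auto simp: reading_le_def staircase_mem)
  have "reading_less (r', c') (r, c)"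
    using b' v by (auto simp: reading_le_iff_less_or_eq)
  then have depth': "col_depth Dd r' c' = i"
    using IH \<open>(r', c') \<in> Dd\<close> b' by simp
  have "r' < r"
  proof (rule ccontr)
    assume "\<not> r' < r"
    then have "r' = r" "c < c'"
      using \<open>reading_less (r', c') (r, c)\<close> by (auto simp: reading_less_def)
    then have "T (r, c) \<le> T (r', c')"
      using b' rc staircase_subset entry_row_mono[of r c c'] by auto
    then show False using b' v by simp
  qed
  have "reading_less (r' + 1, c') (r, c)"
  proof (cases "r' + 1 = r")
    case True
    have "c < c'"
    proof (rule ccontr)
      assume "\<not> c < c'"
      then have "col_depth Dd (r - 1) c' \<le> col_depth Dd (r - 1) c"
        using rc by (intro col_depth_mono_col) (auto simp: staircase_mem)
      moreover have "r' = r - 1"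
        using True by simp
      ultimately show False
        using depth depth' col_depth_step[OF rc] by simp
    qed
    then show ?thesis using True by (simp add: reading_less_def)
  qed (use \<open>r' < r\<close> in \<open>simp add: reading_less_def\<close>)
  moreover have "(r' + 1, c') \<in> Dd"
    using staircase_down_closed[OF \<open>(r', c') \<in> Dd\<close>, of "r' + 1"] \<open>r' < r\<close> rc
    by (simp add: staircase_mem)
  ultimately show ?thesis
    using depth' by simp
qed

lemma entry_le_col_depth_step:
  assumes rc: "(r, c) \<in> Dd"
    and IH: "\<And>r' c'. (r', c') \<in> Dd \<Longrightarrow> reading_less (r', c') (r, c) \<Longrightarrow> T (r', c') = col_depth Dd r' c'"
  shows "T (r, c) \<le> col_depth Dd r c"
proof (rule ccontr)
  assume "\<not> ?thesis"
  then obtain i where v: "T (r, c) = Suc i" and depth: "col_depth Dd r c \<le> i"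
    by (metis less_eq_Suc_le not_less Suc_le_D)
  have "1 \<le> i"
    using depth col_depth_step[OF rc] by simp
  let ?P = "reading_prefix D T (r, c)"
  \<comment> \<open>Moving every entry i read so far one row down gives entries Suc i, also read so far.\<close>
  let ?f = "\<lambda>(a, b). (a + 1, b) :: box"
  have image: "?f ` ?P i \<subseteq> ?P (Suc i) - {(r, c)}"
  proof
    fix y assume "y \<in> ?f ` ?P i"
    then obtain r' c' where b': "(r', c') \<in> ?P i" "y = (r' + 1, c')" by auto
    note below = reading_prefix_above_staircase[OF rc v depth IH b'(1)]
    then have "T (r' + 1, c') = Suc i"
      using IH col_depth_step by simp
    moreover have "(r' + 1, c') \<noteq> (r, c)" "reading_le (r' + 1, c') (r, c)"
      using below by (auto simp: reading_le_iff_less_or_eq reading_less_def)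
    ultimately show "y \<in> ?P (Suc i) - {(r, c)}"
      using below b'(2) staircase_subset by (auto simp: reading_prefix_def)
  qed
  have "inj_on ?f (?P i)"
    by (auto simp: inj_on_def)
  then have "?f ` ?P i = ?P (Suc i)"
    using reading_prefix_injection_onto[OF finite_diagram lattice _ \<open>1 \<le> i\<close>] rc staircase_subset image
    by blast
  moreover have "(r, c) \<in> ?P (Suc i)"
    using rc v staircase_subset by (auto simp: reading_prefix_def reading_le_def)
  ultimately show False
    using image by blast
qed

lemma entry_eq_col_depth: "b \<in> Dd \<Longrightarrow> T b = col_depth Dd (fst b) (snd b)"
  using finite_staircase
proof (induction b rule: reading_less_induct)
  case (less b)
  obtain r c where b: "b = (r, c)" by force
  have "T (r, c) \<le> col_depth Dd r c"
    using less b by (intro entry_le_col_depth_step) auto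
  moreover have "col_depth Dd r c \<le> T (r, c)"
    using col_depth_le_entry less b by force
  ultimately show ?case
    using b by simp
qed

end

text \<open>Row m + 1 of D is the first row of lambda in lambda (+) Delta_alpha, and j = lambda_1 - k is the
  distance by which the move shifts lambda to the right.\<close>

locale staircase_above_row = staircase_tableau +
  fixes p j :: int
  assumes first_row: "(m + 1, x) \<in> D \<longleftrightarrow> 1 - p \<le> x \<and> x \<le> 0"
    and lower_cols: "(r, x) \<in> D \<Longrightarrow> m < r \<Longrightarrow> (m + 1, x) \<in> D"
    and j_le_p: "j \<le> p"
    and first_row_ge_2: "1 - j \<le> x \<Longrightarrow> x \<le> 0 \<Longrightarrow> 2 \<le> T (m + 1, x)"
begin

lemma first_row_mem: "1 \<le> x \<Longrightarrow> x \<le> j \<Longrightarrow> (m + 1, x - j) \<in> D"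
  using first_row j_le_p by simp

lemma first_row_mono: "1 \<le> x \<Longrightarrow> x \<le> y \<Longrightarrow> y \<le> j \<Longrightarrow> T (m + 1, x - j) \<le> T (m + 1, y - j)"
  using entry_row_mono first_row_mem by simp

lemma reading_prefix_first_row_in_staircase:
  assumes "1 \<le> c0" "c0 \<le> j" "i < T (m + 1, c0 - j)"
    and "(r, c) \<in> reading_prefix D T (m + 1, c0 - j) i"
  shows "(r, c) \<in> Dd \<and> col_depth Dd r c = i"
proof -
  have b: "(r, c) \<in> D" "reading_le (r, c) (m + 1, c0 - j)" "T (r, c) = i"
    using assms(4) by (auto simp: reading_prefix_def)
  have "r \<le> m"
  proof (rule ccontr)
    assume "\<not> r \<le> m"
    then have "r = m + 1" "c0 - j \<le> c"
      using b(2) by (auto simp: reading_le_def)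
    then show False
      using entry_row_mono[OF first_row_mem[OF assms(1,2)], of c] b assms(3) by simp
  qed
  then have "(r, c) \<in> Dd"
    using b(1) upper_rows by simp
  then show ?thesis
    using entry_eq_col_depth b(3) by force
qed

lemma staircase_bottom_prefix_between:
  assumes "(m, c') \<in> Dd" "Suc (col_depth Dd m c') = v" "v \<le> col_depth Dd m c"
    and left: "\<And>x. 1 \<le> x \<Longrightarrow> x < c0 \<Longrightarrow> T (m + 1, x - j) < v"
    and IH: "\<And>x. 1 \<le> x \<Longrightarrow> x < c \<Longrightarrow> col_depth Dd m x < T (m + 1, x - j)"
  shows "c0 \<le> c' \<and> c' < c"
proof -
  have "c' < c"
  proof (rule ccontr)
    assume "\<not> c' < c"
    then have "col_depth Dd m c \<le> col_depth Dd m c'"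
      using assms(1) by (intro col_depth_mono_col) (auto simp: staircase_mem)
    then show False using assms(2,3) by simp
  qed
  moreover have "1 \<le> c'"
    using assms(1) g_pos[of m] by (auto simp: staircase_mem)
  ultimately show ?thesis
    using IH[of c'] left[of c'] assms(2) by force
qed

lemma col_depth_less_first_row_step:
  assumes c: "1 \<le> c0" "c0 \<le> c" "c \<le> j"
    and v: "T (m + 1, c0 - j) = v" "T (m + 1, c - j) = v"
    and left: "\<And>x. 1 \<le> x \<Longrightarrow> x < c0 \<Longrightarrow> T (m + 1, x - j) < v"
    and IH: "\<And>x. 1 \<le> x \<Longrightarrow> x < c \<Longrightarrow> col_depth Dd m x < T (m + 1, x - j)"
  shows "col_depth Dd m c < v"
proof (rule ccontr)
  assume "\<not> ?thesis"
  then have depth: "v \<le> col_depth Dd m c" by simp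
  have "2 \<le> v"
    using first_row_ge_2[of "c - j"] c v by simp
  then obtain i where i: "v = Suc i" "1 \<le> i"
    by (cases v) auto
  let ?b0 = "(m + 1, c0 - j)" and ?P = "reading_prefix D T (m + 1, c0 - j)"
  \<comment> \<open>Entries i in row m are matched with entries Suc i of row m + 1 between columns c0 and c.\<close>
  let ?f = "\<lambda>(a, b). if a < m then (a + 1, b) else (m + 1, b - j) :: box"
  have in_staircase: "b \<in> Dd \<and> col_depth Dd (fst b) (snd b) = i" if "b \<in> ?P i" for b
    using reading_prefix_first_row_in_staircase[OF c(1) order_trans[OF c(2,3)], of i "fst b" "snd b"]
      that v i by simp
  have image: "?f ` ?P i \<subseteq> ?P (Suc i) - {(m + 1, c - j)}"
  proof
    fix y assume "y \<in> ?f ` ?P i"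
    then obtain r' c' where b': "(r', c') \<in> ?P i" "y = ?f (r', c')" by auto
    have inDd: "(r', c') \<in> Dd" and depth': "col_depth Dd r' c' = i"
      using in_staircase[OF b'(1)] by auto
    show "y \<in> ?P (Suc i) - {(m + 1, c - j)}"
    proof (cases "r' < m")
      case True
      then have below: "(r' + 1, c') \<in> Dd"
        using staircase_down_closed[OF inDd, of "r' + 1"] by simp
      then have "T (r' + 1, c') = Suc i"
        using entry_eq_col_depth col_depth_step depth' by force
      then show ?thesis
        using b'(2) True below staircase_subset by (auto simp: reading_prefix_def reading_le_def)
    next
      case False
      then have "r' = m"
        using inDd by (simp add: staircase_mem)
      then have "c0 \<le> c'" "c' < c"
        using staircase_bottom_prefix_between[OF _ _ depth left IH] inDd depth' i by auto
      then have "T (m + 1, c' - j) = v"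
        using first_row_mono[of c0 c'] first_row_mono[of c' c] c v \<open>c' < c\<close> by simp
      then show ?thesis
        using b'(2) \<open>r' = m\<close> \<open>c0 \<le> c'\<close> \<open>c' < c\<close> c first_row_mem[of c'] i
        by (auto simp: reading_prefix_def reading_le_def)
    qed
  qed
  have "inj_on ?f (?P i)"
  proof (rule inj_onI)
    fix x y assume "x \<in> ?P i" "y \<in> ?P i" "?f x = ?f y"
    moreover have "fst x \<le> m" "fst y \<le> m"
      using in_staircase \<open>x \<in> ?P i\<close> \<open>y \<in> ?P i\<close> staircase_mem by (metis prod.collapse)+
    ultimately show "x = y"
      by (cases x; cases y) (auto split: if_splits)
  qed
  then have "?f ` ?P i = ?P (Suc i)"
    using reading_prefix_injection_onto[OF finite_diagram lattice _ \<open>1 \<le> i\<close>] image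
      first_row_mem[OF c(1) order_trans[OF c(2,3)]] by blast
  moreover have "(m + 1, c - j) \<in> ?P (Suc i)"
    using first_row_mem[of c] c v i by (auto simp: reading_prefix_def reading_le_def)
  ultimately show False
    using image by blast
qed

lemma col_depth_less_first_row: "1 \<le> c \<Longrightarrow> c \<le> j \<Longrightarrow> col_depth Dd m c < T (m + 1, c - j)"
proof (induction "nat c" arbitrary: c rule: less_induct)
  case less
  let ?v = "T (m + 1, c - j)"
  let ?X = "{x. 1 \<le> x \<and> x \<le> c \<and> T (m + 1, x - j) = ?v}"
  have "finite ?X"
    by (rule finite_subset[of _ "{1..c}"]) auto
  moreover have "c \<in> ?X"
    using less by simp
  ultimately have c0: "Min ?X \<in> ?X" "\<And>x. x \<in> ?X \<Longrightarrow> Min ?X \<le> x"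
    using Min_in[of ?X] Min_le[of ?X] by blast+
  have left: "T (m + 1, x - j) < ?v" if "1 \<le> x" "x < Min ?X" for x
  proof -
    have "x \<le> c"
      using that c0(1) by simp
    then have "x \<notin> ?X" "T (m + 1, x - j) \<le> ?v"
      using c0(2)[of x] that first_row_mono[of x c] less.prems by auto
    then show ?thesis
      using that \<open>x \<le> c\<close> by simp
  qed
  show ?case
    using less by (intro col_depth_less_first_row_step[of "Min ?X" c]) (use c0 left in auto)
qed

lemma staircase_entry_less_first_row:
  assumes "(r, c) \<in> Dd" "c \<le> j"
  shows "T (r, c) < T (m + 1, c - j)"
proof -
  have "T (r, c) = col_depth Dd r c"
    using entry_eq_col_depth assms(1) by force
  also have "\<dots> \<le> col_depth Dd m c"
    using assms(1) by (intro col_depth_mono_row) (simp add: staircase_mem)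
  also have "\<dots> < T (m + 1, c - j)"
    using assms g_pos[of r] by (intro col_depth_less_first_row) (auto simp: staircase_mem)
  finally show ?thesis .
qed

lemma staircase_entry_less_lower:
  assumes "(r, c) \<in> Dd" "(r', c - j) \<in> D" "m < r'"
  shows "T (r, c) < T (r', c - j)"
proof -
  have first: "(m + 1, c - j) \<in> D"
    using lower_cols assms(2,3) by blast
  then have "T (r, c) < T (m + 1, c - j)"
    using assms(1) first_row by (intro staircase_entry_less_first_row) auto
  also have "\<dots> \<le> T (r', c - j)"
    using entry_col_strict[OF first assms(2)] assms(3) by (cases "r' = m + 1") auto
  finally show ?thesis .
qed

end

lemma length_row_lengths: "length (row_lengths alpha) = sum_list alpha"
  unfolding row_lengths_def by (simp add: length_concat comp_def map_nth)

lemma sorted_row_lengths: "sorted (row_lengths alpha)"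
proof -
  have "sorted (concat (map (\<lambda>i. replicate (f i) (i + 1)) [0..<N]))" for f and N :: nat
    by (induction N) (auto simp: sorted_append)
  then show ?thesis
    unfolding row_lengths_def .
qed

lemma row_lengths_bounds: "x \<in> set (row_lengths alpha) \<Longrightarrow> 1 \<le> x \<and> x \<le> length alpha"
  by (auto simp: row_lengths_def)

lemma last_row_length:
  assumes "is_composition alpha" "alpha \<noteq> []"
  shows "row_lengths alpha ! (sum_list alpha - 1) = length alpha"
proof -
  obtain N where N: "length alpha = Suc N"
    using assms(2) by (cases alpha) auto
  then have "0 < alpha ! N"
    using assms(1) by (simp add: is_composition_def)
  moreover have "row_lengths alpha = concat (map (\<lambda>i. replicate (alpha ! i) (i + 1)) [0..<N])
      @ replicate (alpha ! N) (Suc N)"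
    unfolding row_lengths_def N by simp
  ultimately have "row_lengths alpha \<noteq> []" "last (row_lengths alpha) = length alpha"
    using N by simp_all
  then show ?thesis
    by (simp add: last_conv_nth length_row_lengths)
qed

definition delta_row_start :: "nat list \<Rightarrow> int \<Rightarrow> int" where
  "delta_row_start alpha r = int (length alpha) - int (row_lengths alpha ! nat (r - 1)) + 1"

lemma mem_delta_iff:
  "(r, c) \<in> delta alpha \<longleftrightarrow>
     1 \<le> r \<and> r \<le> int (sum_list alpha) \<and> delta_row_start alpha r \<le> c \<and> c \<le> int (length alpha)"
  by (simp add: delta_def delta_row_start_def)

lemma delta_row_start_antimono:
  "1 \<le> r \<Longrightarrow> r \<le> r' \<Longrightarrow> r' \<le> int (sum_list alpha) \<Longrightarrow> delta_row_start alpha r' \<le> delta_row_start alpha r"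
  using sorted_nth_mono[OF sorted_row_lengths, of "nat (r - 1)" "nat (r' - 1)" alpha]
  by (simp add: delta_row_start_def length_row_lengths nat_le_iff nat_diff_distrib')

lemma delta_row_start_pos: "1 \<le> r \<Longrightarrow> r \<le> int (sum_list alpha) \<Longrightarrow> 1 \<le> delta_row_start alpha r"
  using row_lengths_bounds[OF nth_mem, of "nat (r - 1)" alpha]
  by (simp add: delta_row_start_def length_row_lengths)

lemma delta_row_start_last:
  "is_composition alpha \<Longrightarrow> alpha \<noteq> [] \<Longrightarrow> delta_row_start alpha (int (sum_list alpha)) = 1"
  using last_row_length by (simp add: delta_row_start_def nat_diff_distrib')

lemma finite_delta: "finite (delta alpha)"
proof (rule finite_subset[of _ "{1..int (sum_list alpha)} \<times> {1..int (length alpha)}"])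
  show "delta alpha \<subseteq> {1..int (sum_list alpha)} \<times> {1..int (length alpha)}"
    using delta_row_start_pos by (fastforce simp: mem_delta_iff)
qed simp

lemma mem_ferrers_iff:
  "(r, c) \<in> ferrers lam \<longleftrightarrow> 1 \<le> r \<and> r \<le> int (length lam) \<and> 1 \<le> c \<and> c \<le> int (lam ! nat (r - 1))"
  by (simp add: ferrers_def)

lemma ferrers_col_le_part1:
  assumes "is_partition lam" "(r, c) \<in> ferrers lam"
  shows "c \<le> int (part1 lam)"
proof -
  have "lam ! nat (r - 1) \<le> lam ! 0"
    using assms sorted_wrt_nth_less[of "(\<ge>)" lam 0 "nat (r - 1)"]
    by (cases "nat (r - 1) = 0") (auto simp: is_partition_def mem_ferrers_iff)
  then show ?thesis
    using assms(2) by (cases lam) (auto simp: part1_def mem_ferrers_iff)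
qed

lemma ferrers_first_row:
  "is_partition lam \<Longrightarrow> lam \<noteq> [] \<Longrightarrow> (1, c) \<in> ferrers lam \<longleftrightarrow> 1 \<le> c \<and> c \<le> int (part1 lam)"
  by (cases lam) (auto simp: part1_def mem_ferrers_iff)

lemma finite_ferrers: "finite (ferrers lam)"
proof (rule finite_subset[of _ "{1..int (length lam)} \<times> {1..int (sum_list lam)}"])
  show "ferrers lam \<subseteq> {1..int (length lam)} \<times> {1..int (sum_list lam)}"
  proof (rule subrelI)
    fix r c assume "(r, c) \<in> ferrers lam"
    moreover have "lam ! nat (r - 1) \<le> sum_list lam"
      using calculation by (intro elem_le_sum_list) (auto simp: mem_ferrers_iff)
    ultimately show "(r, c) \<in> {1..int (length lam)} \<times> {1..int (sum_list lam)}"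
      by (auto simp: mem_ferrers_iff)
  qed
qed simp

lemma top_right_ferrers:
  assumes "is_partition lam" "lam \<noteq> []"
  shows "top_right (ferrers lam) = (1, int (part1 lam))"
proof -
  have "0 < part1 lam"
    using assms by (cases lam) (auto simp: is_partition_def part1_def)
  have first_row: "(1, c) \<in> ferrers lam \<longleftrightarrow> 1 \<le> c \<and> c \<le> int (part1 lam)" for c
    using ferrers_first_row[OF assms] .
  have "Min (fst ` ferrers lam) = 1"
  proof (rule Min_eqI)
    show "1 \<in> fst ` ferrers lam"
      using first_row[of 1] \<open>0 < part1 lam\<close> by (intro image_eqI[of _ _ "(1, 1)"]) simp_all
  qed (auto simp: finite_ferrers mem_ferrers_iff)
  moreover have "Max {c. (1, c) \<in> ferrers lam} = int (part1 lam)"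
    by (rule Max_eqI) (use first_row \<open>0 < part1 lam\<close> in \<open>simp_all add: finite_row finite_ferrers\<close>)
  ultimately show ?thesis
    by (simp add: top_right_def)
qed

lemma bottom_left_delta:
  assumes "is_composition alpha" "alpha \<noteq> []"
  shows "bottom_left (delta alpha) = (int (sum_list alpha), 1)"
proof -
  have "0 < sum_list alpha" "0 < length alpha"
    using assms by (cases alpha; auto simp: is_composition_def)+
  have last_row: "(int (sum_list alpha), c) \<in> delta alpha \<longleftrightarrow> 1 \<le> c \<and> c \<le> int (length alpha)" for c
    using delta_row_start_last[OF assms] \<open>0 < sum_list alpha\<close> by (simp add: mem_delta_iff)
  have "Max (fst ` delta alpha) = int (sum_list alpha)"
  proof (rule Max_eqI)
    show "int (sum_list alpha) \<in> fst ` delta alpha"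
      using last_row[of 1] \<open>0 < length alpha\<close>
      by (intro image_eqI[of _ _ "(int (sum_list alpha), 1)"]) (simp_all add: Suc_le_eq)
  qed (auto simp: finite_delta mem_delta_iff)
  moreover have "Min {c. (int (sum_list alpha), c) \<in> delta alpha} = 1"
    by (rule Min_eqI) (use last_row \<open>0 < length alpha\<close> in \<open>simp_all add: finite_row finite_delta Suc_le_eq\<close>)
  ultimately show ?thesis
    by (simp add: bottom_left_def)
qed

lemma dsum_offset_ferrers_delta:
  "is_partition lam \<Longrightarrow> lam \<noteq> [] \<Longrightarrow> is_composition alpha \<Longrightarrow> alpha \<noteq> []
    \<Longrightarrow> dsum_offset (ferrers lam) (delta alpha) = (int (sum_list alpha), - int (part1 lam))"
  by (simp add: dsum_offset_def top_right_ferrers bottom_left_delta)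

lemma row_entries_ge_2:
  assumes ss: "semistandard D T"
    and row: "\<And>x. (r, x) \<in> D \<longleftrightarrow> a \<le> x \<and> x \<le> b"
    and ones: "card {x. (r, x) \<in> D \<and> T (r, x) = 1} \<le> k"
    and x: "a + int k \<le> x" "x \<le> b"
  shows "2 \<le> T (r, x)"
proof (rule ccontr)
  assume "\<not> ?thesis"
  have "(r, x) \<in> D"
    using row x by simp
  have "{a..x} \<subseteq> {x. (r, x) \<in> D \<and> T (r, x) = 1}"
  proof
    fix y assume "y \<in> {a..x}"
    then have "(r, y) \<in> D"
      using row x by simp
    then have "0 < T (r, y)" "T (r, y) \<le> T (r, x)"
      using ss \<open>(r, x) \<in> D\<close> \<open>y \<in> {a..x}\<close> unfolding semistandard_def by auto
    then show "y \<in> {x. (r, x) \<in> D \<and> T (r, x) = 1}"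
      using \<open>(r, y) \<in> D\<close> \<open>\<not> 2 \<le> T (r, x)\<close> by simp
  qed
  moreover have "finite {x. (r, x) \<in> D \<and> T (r, x) = 1}"
    by (rule finite_subset[of _ "{a..b}"]) (auto simp: row)
  ultimately have "card {a..x} \<le> k"
    using ones card_mono order_trans by blast
  then show False
    using x by simp
qed

lemma mem_direct_sum_ferrers_delta:
  assumes "is_partition lam" "lam \<noteq> []" "is_composition alpha" "alpha \<noteq> []"
  shows "(r, c) \<in> direct_sum (ferrers lam) (delta alpha)
    \<longleftrightarrow> (r, c) \<in> delta alpha \<or> (r - int (sum_list alpha), c + int (part1 lam)) \<in> ferrers lam"
  by (auto simp: direct_sum_def dsum_offset_ferrers_delta[OF assms] mem_shift_iff)

lemma mem_S_diag:
  "(r, c) \<in> S_diag lam alpha k \<longleftrightarrow> (r, c) \<in> delta alpha \<or> (r - int (sum_list alpha), c + int k) \<in> ferrers lam"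
  by (auto simp: S_diag_def foundation_def mem_shift_iff)

lemma staircase_above_row_direct_sum:
  assumes comp: "is_composition alpha" and part: "is_partition lam"
    and nonempty: "alpha \<noteq> []" "lam \<noteq> []"
    and ss: "semistandard (direct_sum (ferrers lam) (delta alpha)) T"
    and lw: "lattice_word (reading_word (direct_sum (ferrers lam) (delta alpha)) T)"
    and ones: "card {c. (fst (dsum_offset (ferrers lam) (delta alpha)) + 1, c)
                   \<in> shift (dsum_offset (ferrers lam) (delta alpha)) (ferrers lam)
                 \<and> T (fst (dsum_offset (ferrers lam) (delta alpha)) + 1, c) = 1} \<le> k"
  shows "staircase_above_row (direct_sum (ferrers lam) (delta alpha)) (delta alpha) T
      (int (sum_list alpha)) (int (length alpha)) (delta_row_start alpha)
      (int (part1 lam)) (int (part1 lam) - int k)"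
proof -
  define D m p where "D = direct_sum (ferrers lam) (delta alpha)"
    and "m = int (sum_list alpha)" and "p = int (part1 lam)"
  have mem_D: "(r, c) \<in> D \<longleftrightarrow> (r, c) \<in> delta alpha \<or> (r - m, c + p) \<in> ferrers lam" for r c
    unfolding D_def m_def p_def by (rule mem_direct_sum_ferrers_delta[OF part nonempty(2) comp nonempty(1)])
  have first_row: "(m + 1, x) \<in> D \<longleftrightarrow> 1 - p \<le> x \<and> x \<le> 0" for x
    using ferrers_first_row[OF part nonempty(2), of "x + p"] by (auto simp: mem_D mem_delta_iff m_def p_def)
  have "finite D"
    unfolding D_def direct_sum_def by (simp add: finite_shift finite_ferrers finite_delta)
  have upper_rows: "(r, c) \<in> delta alpha" if "(r, c) \<in> D" "r \<le> m" for r c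
    using that by (auto simp: mem_D mem_ferrers_iff)
  have lower_cols: "(m + 1, x) \<in> D" if "(r, x) \<in> D" "m < r" for r x
  proof -
    have "(r - m, x + p) \<in> ferrers lam"
      using that by (auto simp: mem_D mem_delta_iff m_def)
    then have "x + p \<le> p" "1 \<le> x + p"
      using ferrers_col_le_part1[OF part] by (force simp: p_def, simp add: mem_ferrers_iff)
    then show ?thesis
      by (simp add: first_row)
  qed
  have "card {x. (m + 1, x) \<in> D \<and> T (m + 1, x) = 1} \<le> k"
    using ones by (simp add: dsum_offset_ferrers_delta[OF part nonempty(2) comp nonempty(1)]
        D_def direct_sum_def mem_shift_iff mem_delta_iff m_def p_def)
  then have "2 \<le> T (m + 1, x)" if "1 - (p - int k) \<le> x" "x \<le> 0" for x
    using row_entries_ge_2[OF ss[folded D_def] first_row] that by simp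
  then show ?thesis
    unfolding D_def[symmetric] m_def[symmetric] p_def[symmetric]
  proof unfold_locales
    show "(r, c) \<in> delta alpha \<longleftrightarrow> 1 \<le> r \<and> r \<le> m \<and> delta_row_start alpha r \<le> c \<and> c \<le> int (length alpha)"
      for r c by (simp add: mem_delta_iff m_def)
    show "delta_row_start alpha r' \<le> delta_row_start alpha r" if "1 \<le> r" "r \<le> r'" "r' \<le> m" for r r'
      using delta_row_start_antimono that by (simp add: m_def)
    show "1 \<le> delta_row_start alpha r" if "1 \<le> r" "r \<le> m" for r
      using delta_row_start_pos that by (simp add: m_def)
    show "delta alpha \<subseteq> D"
      using mem_D by auto
  qed (use upper_rows lower_cols \<open>finite D\<close> ss lw first_row in \<open>simp_all add: D_def\<close>)
qed

lemma moved_tableau_nonempty: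
  assumes comp: "is_composition alpha" and part: "is_partition lam"
    and nonempty: "alpha \<noteq> []" "lam \<noteq> []"
    and ss: "semistandard (direct_sum (ferrers lam) (delta alpha)) T"
    and lw: "lattice_word (reading_word (direct_sum (ferrers lam) (delta alpha)) T)"
    and ones: "card {c. (fst (dsum_offset (ferrers lam) (delta alpha)) + 1, c)
                   \<in> shift (dsum_offset (ferrers lam) (delta alpha)) (ferrers lam)
                 \<and> T (fst (dsum_offset (ferrers lam) (delta alpha)) + 1, c) = 1} \<le> k"
  shows "semistandard (S_diag lam alpha k) (moved_tableau lam alpha k T)
       \<and> lattice_word (reading_word (S_diag lam alpha k) (moved_tableau lam alpha k T))"
proof -
  define D E m j where "D = direct_sum (ferrers lam) (delta alpha)" and "E = S_diag lam alpha k"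
    and "m = int (sum_list alpha)" and "j = int (part1 lam) - int k"
  interpret staircase_above_row D "delta alpha" T m "int (length alpha)" "delta_row_start alpha"
      "int (part1 lam)" j
    unfolding D_def m_def j_def by (rule staircase_above_row_direct_sum[OF assms])
  have mem_D: "(r, c) \<in> D \<longleftrightarrow> (r, c) \<in> delta alpha \<or> (r - m, c + int (part1 lam)) \<in> ferrers lam" for r c
    unfolding D_def m_def by (rule mem_direct_sum_ferrers_delta[OF part nonempty(2) comp nonempty(1)])
  have upper: "(r, c) \<in> E \<longleftrightarrow> (r, c) \<in> D" if "r \<le> m" for r c
    using that by (auto simp: E_def mem_S_diag mem_D mem_ferrers_iff m_def)
  have lower: "(r, c) \<in> E \<longleftrightarrow> (r, c - j) \<in> D" if "m < r" for r c
    using that by (simp add: E_def mem_S_diag mem_D mem_delta_iff j_def m_def)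
  have vals: "moved_tableau lam alpha k T (r, c) = (if r \<le> m then T (r, c) else T (r, c - j))"
    if "(r, c) \<in> E" for r c
  proof (cases "r \<le> m")
    case True
    then show ?thesis
      using that upper upper_rows by (simp add: moved_tableau_def)
  next
    case False
    then show ?thesis
      by (simp add: moved_tableau_def mem_delta_iff m_def j_def algebra_simps
          dsum_offset_ferrers_delta[OF part nonempty(2) comp nonempty(1)])
  qed
  have cross: "T (r, c) < T (r', c - j)" if "(r, c) \<in> D" "r \<le> m" "(r', c - j) \<in> D" "m < r'" for r r' c
    using staircase_entry_less_lower[OF upper_rows[OF that(1,2)] that(3,4)] .
  have "semistandard E (moved_tableau lam alpha k T)"
    using semistandard_shift_lower_rows[of D T m E j "moved_tableau lam alpha k T"] semistandard upper lower vals cross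
    by blast
  moreover have "reading_word E (moved_tableau lam alpha k T) = reading_word D T"
    by (rule reading_word_shift_lower_rows[OF finite_diagram _ upper lower vals])
      (simp add: E_def S_diag_def foundation_def finite_shift finite_ferrers finite_delta)
  ultimately show ?thesis
    using lattice by (simp add: E_def)
qed

lemma moved_tableau_empty_partition:
  assumes "semistandard (direct_sum (ferrers []) (delta alpha)) T"
    and "lattice_word (reading_word (direct_sum (ferrers []) (delta alpha)) T)"
  shows "semistandard (S_diag [] alpha k) (moved_tableau [] alpha k T)
       \<and> lattice_word (reading_word (S_diag [] alpha k) (moved_tableau [] alpha k T))"
proof -
  have "ferrers [] = {}"
    by (simp add: ferrers_def)
  then have "direct_sum (ferrers []) (delta alpha) = delta alpha" "S_diag [] alpha k = delta alpha"
    by (simp_all add: direct_sum_def S_diag_def foundation_def shift_def)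
  moreover have "moved_tableau [] alpha k T b = T b" if "b \<in> delta alpha" for b
    using that by (cases b) (simp add: moved_tableau_def)
  ultimately show ?thesis
    using assms semistandard_cong reading_word_cong[OF finite_delta] by metis
qed

lemma moved_tableau_empty_composition:
  assumes "semistandard (direct_sum (ferrers lam) (delta [])) T"
    and "lattice_word (reading_word (direct_sum (ferrers lam) (delta [])) T)"
  shows "semistandard (S_diag lam [] k) (moved_tableau lam [] k T)
       \<and> lattice_word (reading_word (S_diag lam [] k) (moved_tableau lam [] k T))"
proof -
  \<comment> \<open>For empty Delta_alpha the offset is unspecified (Min and Max of empty sets); only the
    fact that the same offset occurs in the diagram and in the moved tableau matters.\<close>
  obtain a b where offset: "dsum_offset (ferrers lam) {} = (a, b)"
    by force
  have "delta [] = {}"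
    by (simp add: delta_def)
  then have D: "direct_sum (ferrers lam) (delta []) = shift (a, b) (ferrers lam)"
    and E: "S_diag lam [] k = shift (- a, - (int k + b)) (shift (a, b) (ferrers lam))"
    by (simp_all add: direct_sum_def offset S_diag_def foundation_def shift_shift)
  have vals: "moved_tableau lam [] k T (r, c) = T (r + a, c + (int k + b))" for r c
    using \<open>delta [] = {}\<close> by (simp add: moved_tableau_def offset algebra_simps)
  have "semistandard (S_diag lam [] k) (moved_tableau lam [] k T)"
    using assms(1) unfolding D E
    by (rule semistandard_translate) (auto simp: mem_shift_iff vals algebra_simps)
  moreover have "reading_word (S_diag lam [] k) (moved_tableau lam [] k T)
      = reading_word (direct_sum (ferrers lam) (delta [])) T"
    unfolding D E
    by (rule reading_word_translate) (auto simp: finite_shift finite_ferrers vals)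
  ultimately show ?thesis
    using assms(2) by simp
qed

theorem mainTheorem2:
  fixes alpha lam :: "nat list" and k :: nat and T :: tableau
  assumes "is_composition alpha"
    and "is_partition lam"
    and "int (part1 lam) - int k \<le> int (length alpha)"
    and "semistandard (direct_sum (ferrers lam) (delta alpha)) T"
    and "lattice_word (reading_word (direct_sum (ferrers lam) (delta alpha)) T)"
    and "card {c. (fst (dsum_offset (ferrers lam) (delta alpha)) + 1, c)
                   \<in> shift (dsum_offset (ferrers lam) (delta alpha)) (ferrers lam)
                 \<and> T (fst (dsum_offset (ferrers lam) (delta alpha)) + 1, c) = 1} \<le> k"
  shows "semistandard (S_diag lam alpha k) (moved_tableau lam alpha k T)
       \<and> lattice_word (reading_word (S_diag lam alpha k) (moved_tableau lam alpha k T))"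
proof -
  \<comment> \<open>The bound on lambda_1 - k only keeps the foundation within the columns of Delta_alpha;
    the argument does not need it.\<close>
  consider "lam = []" | "alpha = []" | "lam \<noteq> []" "alpha \<noteq> []"
    by blast
  then show ?thesis
  proof cases
    case 1
    then show ?thesis
      using moved_tableau_empty_partition assms(4,5) by blast
  next
    case 2
    then show ?thesis
      using moved_tableau_empty_composition assms(4,5) by blast
  next
    case 3
    then show ?thesis
      using moved_tableau_nonempty assms(1,2,4-6) by blast
  qed
qed

end
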